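(* Let $n\ge1$. For every function $f(t)=\sum_{j=1}^na_je^{\lambda_jt}$ with $a_j,\lambda_j\in\mathbb{C}$ and $\mathrm{Re}(\lambda_j)<0$ for all $j$, $$\|f'\|_{L_2[0,\infty)} \le \left(\frac12+\max_{1\le j\le n}\left|\lambda_j+\frac12\right| + 2\left(\sum_{j=1}^n\mathrm{Re}(\lambda_j)\sum_{k=j+1}^n\mathrm{Re}(\lambda_k)\right)^{1/2}\right)\|f\|_{L_2[0,\infty)}.$$
   Context: $\|g\|_{L_2[0,\infty)}:=(\int_0^\infty|g(t)|^2dt)^{1/2}$. *)

theory Defs
  imports "HOL-Analysis.Analysis"
begin

definition L2_norm_pos :: "(real \<Rightarrow> complex) \<Rightarrow> real" where
  "L2_norm_pos g = sqrt (LINT t:{0..}|lborel. (cmod (g t))^2)"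

end

theory Submission
  imports Defs "HOL-Probability.Sinc_Integral"
begin

(* Write f as a sum of c m * e^(m t) over its distinct exponents m.  Since
   -1/(m + cnj m') is the L_2[0,oo) inner product of e^(m t) and e^(m' t), the squared norm
   of f is a Hermitian form in c with this Cauchy matrix.  Multiplying Laplace transforms by
   the Blaschke factor (s + cnj l)/(s - l) is an isometry onto the orthogonal complement of
   e^(l t); hence f = a e^(l t) + (Blaschke image of some g over the other exponents) with
   ||f||^2 = |a|^2/(-2 Re l) + ||g||^2.  Differentiating and inducting along this splitting
   gives f' = p + q with ||p|| <= max |m| ||f|| and ||q||^2 <= 2 T ||f||^2, where
   T = 2 sum_{j<k} Re m_j Re m_k: the part q collects the values g(0), which satisfy
   |g(0)|^2 <= 2 (sum of -Re m) ||g||^2.  Finally |m| <= 1/2 + |m + 1/2|. *)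

lemma set_integrable_exp_complex_Ioi:
  fixes z :: complex
  assumes "Re z < 0"
  shows "set_integrable lborel {0<..} (\<lambda>x::real. exp (z * of_real x))"
proof (rule set_integrable_bound[OF integrable_I0i_exp_mscale[of "- Re z"]])
  show "0 < - Re z" using assms by simp
  show "set_borel_measurable lborel {0<..} (\<lambda>x::real. exp (z * of_real x))"
    unfolding set_borel_measurable_def by measurable
  show "AE x in lborel. x \<in> {0<..} \<longrightarrow> norm (exp (z * of_real x)) \<le> norm (exp (- (x * - Re z)))"
    by (simp add: norm_exp_eq_Re mult.commute)
qed

lemma has_bochner_integral_exp_complex_Ioi:
  fixes z :: complex
  assumes "Re z < 0"
  shows "has_bochner_integral lborel (\<lambda>x::real. indicator {0<..} x *\<^sub>R exp (z * of_real x)) (- 1 / z)"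
proof -
  have z: "z \<noteq> 0" using assms by auto
  have "(LBINT x=0..\<infinity>. exp (z * of_real x)) = 0 - 1 / z"
  proof (rule interval_integral_FTC_integrable[where F="\<lambda>x. exp (z * of_real x) / z"])
    show "(0::ereal) < \<infinity>" by simp
    show "((\<lambda>x. exp (z * of_real x) / z) has_vector_derivative exp (z * of_real x)) (at x)" for x
    proof -
      have "((\<lambda>w. exp (z * w) / z) has_field_derivative exp (z * of_real x)) (at (of_real x))"
        using z by (auto intro!: derivative_eq_intros simp: field_simps)
      then show ?thesis by (rule has_vector_derivative_real_field)
    qed
    show "isCont (\<lambda>x::real. exp (z * of_real x)) x" for x by (intro continuous_intros)
    show "set_integrable lborel (einterval 0 \<infinity>) (\<lambda>x::real. exp (z * of_real x))"
      using set_integrable_exp_complex_Ioi[OF assms] by (simp add: zero_ereal_def)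
    show "(((\<lambda>x. exp (z * of_real x) / z) \<circ> real_of_ereal) \<longlongrightarrow> 1 / z) (at_right 0)"
      using z by (auto simp: zero_ereal_def ereal_tendsto_simps intro!: tendsto_eq_intros)
    have "((\<lambda>x::real. exp (z * of_real x) / z) \<longlongrightarrow> 0) at_top"
    proof (rule tendsto_norm_zero_cancel)
      have "filterlim (\<lambda>x::real. Re z * x) at_bot at_top"
        using assms by (auto intro!: filterlim_tendsto_neg_mult_at_bot filterlim_ident)
      then have "((\<lambda>x::real. exp (Re z * x)) \<longlongrightarrow> 0) at_top"
        by (rule exp_at_bot[THEN filterlim_compose])
      then have "((\<lambda>x::real. exp (Re z * x) / cmod z) \<longlongrightarrow> 0) at_top"
        by (rule tendsto_divide_zero)
      then show "((\<lambda>x::real. norm (exp (z * of_real x) / z)) \<longlongrightarrow> 0) at_top"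
        by (simp add: norm_divide norm_exp_eq_Re mult.commute)
    qed
    then show "(((\<lambda>x. exp (z * of_real x) / z) \<circ> real_of_ereal) \<longlongrightarrow> 0) (at_left \<infinity>)"
      unfolding ereal_tendsto_simps by simp
  qed
  then have "(LINT x:{0<..}|lborel. exp (z * of_real x)) = - 1 / z"
    by (simp add: interval_lebesgue_integral_0_infty)
  then show ?thesis
    using set_integrable_exp_complex_Ioi[OF assms]
    unfolding has_bochner_integral_iff set_integrable_def set_lebesgue_integral_def by simp
qed

lemma set_integral_Ici_eq_Ioi:
  fixes f :: "real \<Rightarrow> real"
  assumes [measurable]: "f \<in> borel_measurable lborel"
  shows "(LINT t:{0..}|lborel. f t) = (LINT t:{0<..}|lborel. f t)"
proof (rule set_integral_cong_set)
  show "set_borel_measurable lborel {0<..} f" "set_borel_measurable lborel {0..} f"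
    unfolding set_borel_measurable_def by measurable
  show "AE x in lborel. (x \<in> {0<..}) = (x \<in> {0::real..})"
    using AE_lborel_singleton[of 0] by (rule eventually_mono) (auto simp: less_le)
qed

definition exp_sum :: "complex set \<Rightarrow> (complex \<Rightarrow> complex) \<Rightarrow> real \<Rightarrow> complex" where
  "exp_sum L c t = (\<Sum>m\<in>L. c m * exp (m * of_real t))"

definition cauchy_kernel :: "complex \<Rightarrow> complex \<Rightarrow> complex" where
  "cauchy_kernel m m' = - 1 / (m + cnj m')"

definition exp_inner :: "complex set \<Rightarrow> (complex \<Rightarrow> complex) \<Rightarrow> (complex \<Rightarrow> complex) \<Rightarrow> complex" where
  "exp_inner L c d = (\<Sum>m\<in>L. \<Sum>m'\<in>L. c m * cnj (d m') * cauchy_kernel m m')"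

definition exp_norm2 :: "complex set \<Rightarrow> (complex \<Rightarrow> complex) \<Rightarrow> real" where
  "exp_norm2 L c = Re (exp_inner L c c)"

lemma L2_norm_pos_exp_sum:
  assumes fin: "finite L" and neg: "\<forall>m\<in>L. Re m < 0"
  shows "L2_norm_pos (exp_sum L c) = sqrt (exp_norm2 L c)"
proof -
  let ?g = "\<lambda>x::real. \<Sum>m\<in>L. \<Sum>m'\<in>L. c m * cnj (c m') * exp ((m + cnj m') * of_real x)"
  have "has_bochner_integral lborel (\<lambda>x. indicator {0<..} x *\<^sub>R ?g x) (exp_inner L c c)"
    unfolding exp_inner_def cauchy_kernel_def scaleR_sum_right
  proof (intro has_bochner_integral_sum)
    fix m m' assume "m \<in> L" "m' \<in> L"
    then have "Re (m + cnj m') < 0" using neg by (simp add: add_neg_neg)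
    from has_bochner_integral_mult_right[OF has_bochner_integral_exp_complex_Ioi[OF this]]
    show "has_bochner_integral lborel
        (\<lambda>x. indicator {0<..} x *\<^sub>R (c m * cnj (c m') * exp ((m + cnj m') * of_real x)))
        (c m * cnj (c m') * (- 1 / (m + cnj m')))"
      by (simp add: indicator_scaleR_eq_if)
  qed
  then have integral: "(LINT t:{0<..}|lborel. ?g t) = exp_inner L c c"
    unfolding set_lebesgue_integral_def by (rule has_bochner_integral_integral_eq)
  have square: "complex_of_real ((cmod (exp_sum L c x))^2) = ?g x" for x
  proof -
    have exp_mult_cnj: "exp (m * of_real x) * cnj (exp (m' * of_real x)) = exp ((m + cnj m') * of_real x)"
      for m m' by (simp add: exp_cnj exp_add[symmetric] distrib_right)
    have "complex_of_real ((cmod (exp_sum L c x))^2) = exp_sum L c x * cnj (exp_sum L c x)"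
      by (rule complex_norm_square)
    also have "\<dots> = ?g x"
      unfolding exp_sum_def cnj_sum sum_product
      by (intro sum.cong refl) (subst exp_mult_cnj[symmetric], simp add: mult_ac)
    finally show ?thesis .
  qed
  have "continuous_on UNIV (\<lambda>t. (cmod (exp_sum L c t))^2)"
    unfolding exp_sum_def by (intro continuous_intros)
  then have "(LINT t:{0..}|lborel. (cmod (exp_sum L c t))^2) = (LINT t:{0<..}|lborel. (cmod (exp_sum L c t))^2)"
    using borel_measurable_continuous_onI by (intro set_integral_Ici_eq_Ioi) simp
  also have "complex_of_real \<dots> = exp_inner L c c"
    unfolding set_integral_complex_of_real[symmetric] square integral ..
  finally show ?thesis
    unfolding L2_norm_pos_def exp_norm2_def by (metis Re_complex_of_real)
qed

lemma has_vector_derivative_exp_sum: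
  "(exp_sum L c has_vector_derivative exp_sum L (\<lambda>m. m * c m) t) (at t)"
proof -
  have "((\<lambda>w. \<Sum>m\<in>L. c m * exp (m * w)) has_field_derivative exp_sum L (\<lambda>m. m * c m) t) (at (of_real t))"
    unfolding exp_sum_def by (auto intro!: derivative_eq_intros sum.cong simp: mult_ac)
  from has_vector_derivative_real_field[OF this] show ?thesis
    unfolding exp_sum_def by simp
qed

lemma exp_sum_reindex:
  assumes "finite J"
  shows "(\<Sum>j\<in>J. a j * exp (lam j * of_real t))
       = exp_sum (lam ` J) (\<lambda>m. \<Sum>j\<in>{j\<in>J. lam j = m}. a j) t"
  unfolding exp_sum_def sum_distrib_right
  by (subst sum.image_gen[OF assms, where g=lam]) (intro sum.cong refl, auto)

(* Partial fractions behind the splitting: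
     (s + cnj l)/(s - l) * 1/(s - m) = blaschke_pole l m/(s - l) + blaschke_node l m/(s - m). *)

definition blaschke_pole :: "complex \<Rightarrow> complex \<Rightarrow> complex" where
  "blaschke_pole l m = (l + cnj l) / (l - m)"

definition blaschke_node :: "complex \<Rightarrow> complex \<Rightarrow> complex" where
  "blaschke_node l m = (m + cnj l) / (m - l)"

(* the coefficients of a e^(l t) plus the Blaschke image of exp_sum L g *)
definition blaschke_ext ::
    "complex \<Rightarrow> complex set \<Rightarrow> complex \<Rightarrow> (complex \<Rightarrow> complex) \<Rightarrow> complex \<Rightarrow> complex" where
  "blaschke_ext l L a g =
     (\<lambda>m. if m = l then a + (\<Sum>m'\<in>L. blaschke_pole l m' * g m') else blaschke_node l m * g m)"

definition blaschke_tail :: "complex \<Rightarrow> (complex \<Rightarrow> complex) \<Rightarrow> complex \<Rightarrow> complex" where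
  "blaschke_tail l c = (\<lambda>m. c m / blaschke_node l m)"

definition blaschke_head :: "complex \<Rightarrow> complex set \<Rightarrow> (complex \<Rightarrow> complex) \<Rightarrow> complex" where
  "blaschke_head l L c = c l - (\<Sum>m\<in>L. blaschke_pole l m * blaschke_tail l c m)"

lemma add_cnj_nonzero: "Re a < 0 \<Longrightarrow> Re b < 0 \<Longrightarrow> a + cnj b \<noteq> 0"
  by (metis add_neg_neg cnj.sel(1) less_irrefl plus_complex.sel(1) zero_complex.sel(1))

lemma cauchy_kernel_diag: "cauchy_kernel l l = complex_of_real (- 1 / (2 * Re l))"
  unfolding cauchy_kernel_def by (simp add: complex_add_cnj)

lemma blaschke_node_kernel:
  assumes "Re l < 0" "Re m < 0" "m \<noteq> l"
  shows "blaschke_node l m * cauchy_kernel m l = - cauchy_kernel l l * blaschke_pole l m"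
proof -
  have "m + cnj l \<noteq> 0" "l + cnj l \<noteq> 0" "m - l \<noteq> 0" "l - m \<noteq> 0"
    using add_cnj_nonzero assms by auto
  then show ?thesis
    unfolding blaschke_node_def cauchy_kernel_def blaschke_pole_def by (simp add: field_simps)
qed

lemma cnj_blaschke_node_kernel:
  assumes "Re l < 0" "Re m < 0" "m \<noteq> l"
  shows "cnj (blaschke_node l m) * cauchy_kernel l m = - cauchy_kernel l l * cnj (blaschke_pole l m)"
proof -
  have "l + cnj m \<noteq> 0" "l + cnj l \<noteq> 0" "cnj l + m \<noteq> 0" "cnj m - cnj l \<noteq> 0" "cnj l - cnj m \<noteq> 0"
    using add_cnj_nonzero[of m l] add_cnj_nonzero assms by (auto simp: add.commute)
  then show ?thesis
    unfolding blaschke_node_def cauchy_kernel_def blaschke_pole_def by (simp add: field_simps)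
qed

lemma blaschke_node_kernel_node:
  assumes "Re l < 0" "Re m < 0" "m \<noteq> l" "Re m' < 0" "m' \<noteq> l"
  shows "blaschke_node l m * cnj (blaschke_node l m') * cauchy_kernel m m'
       = cauchy_kernel m m' + cauchy_kernel l l * blaschke_pole l m * cnj (blaschke_pole l m')"
proof -
  have field_identity: "(s - w)/u * ((s - u)/w) * (-1/s) = -1/s - (s - u - w)/((-u) * (-w))"
    if "s \<noteq> 0" "u \<noteq> 0" "w \<noteq> 0" for s u w :: complex
    using that by (simp add: field_simps)
  have nz: "m + cnj m' \<noteq> 0" "l + cnj l \<noteq> 0" "cnj m' - cnj l \<noteq> 0" "m - l \<noteq> 0"
    using add_cnj_nonzero assms by auto
  have "(m + cnj l)/(m - l) * ((cnj m' + l)/(cnj m' - cnj l)) * (-1/(m + cnj m'))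
      = -1/(m + cnj m') - (cnj l + l)/((l - m) * (cnj l - cnj m'))"
    using field_identity[OF nz(1) nz(4) nz(3)] by (simp add: algebra_simps)
  moreover have "cauchy_kernel l l * blaschke_pole l m * cnj (blaschke_pole l m')
      = - ((cnj l + l)/((l - m) * (cnj l - cnj m')))"
    using nz(2) unfolding cauchy_kernel_def blaschke_pole_def by (simp add: field_simps add.commute)
  ultimately show ?thesis
    unfolding blaschke_node_def cauchy_kernel_def by (simp add: add.commute)
qed

lemma blaschke_pole_add_node:
  assumes "m \<noteq> l"
  shows "blaschke_pole l m + blaschke_node l m = 1"
proof -
  have "blaschke_node l m = - (m + cnj l) / (l - m)"
    unfolding blaschke_node_def by (metis divide_minus_right minus_diff_eq divide_minus_left)
  then have "blaschke_pole l m + blaschke_node l m = (l - m) / (l - m)"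
    unfolding blaschke_pole_def by (simp add: add_divide_distrib[symmetric] algebra_simps)
  then show ?thesis using assms by simp
qed

lemma mult_blaschke_pole: "m \<noteq> l \<Longrightarrow> l * blaschke_pole l m = (l + cnj l) + blaschke_pole l m * m"
  unfolding blaschke_pole_def by (simp add: field_simps)

lemma blaschke_node_nonzero: "Re l < 0 \<Longrightarrow> Re m < 0 \<Longrightarrow> m \<noteq> l \<Longrightarrow> blaschke_node l m \<noteq> 0"
  unfolding blaschke_node_def using add_cnj_nonzero[of m l] by simp

lemma blaschke_ext_at_pole: "blaschke_ext l L a g l = a + (\<Sum>m\<in>L. blaschke_pole l m * g m)"
  unfolding blaschke_ext_def by simp

lemma blaschke_ext_at_node: "m \<noteq> l \<Longrightarrow> blaschke_ext l L a g m = blaschke_node l m * g m"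
  unfolding blaschke_ext_def by simp

lemma blaschke_ext_add:
  "blaschke_ext l L a g m + blaschke_ext l L b h m = blaschke_ext l L (a + b) (\<lambda>m. g m + h m) m"
  unfolding blaschke_ext_def by (simp add: sum.distrib algebra_simps)

lemma blaschke_ext_cong:
  "(\<And>m. m \<in> L \<Longrightarrow> g m = g' m) \<Longrightarrow> m \<in> insert l L \<Longrightarrow> blaschke_ext l L a g m = blaschke_ext l L a g' m"
  unfolding blaschke_ext_def by (auto intro!: sum.cong)

lemma blaschke_ext_head_tail:
  assumes "l \<notin> L" "Re l < 0" "\<forall>m\<in>L. Re m < 0" "m \<in> insert l L"
  shows "blaschke_ext l L (blaschke_head l L c) (blaschke_tail l c) m = c m"
  using assms blaschke_node_nonzero[of l m]
  by (cases "m = l") (auto simp: blaschke_ext_at_pole blaschke_ext_at_node blaschke_head_def blaschke_tail_def)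

lemma sum_blaschke_ext:
  assumes "finite L" "l \<notin> L"
  shows "(\<Sum>m\<in>insert l L. blaschke_ext l L a g m) = a + (\<Sum>m\<in>L. g m)"
proof -
  have "(\<Sum>m\<in>insert l L. blaschke_ext l L a g m)
      = a + (\<Sum>m\<in>L. blaschke_pole l m * g m) + (\<Sum>m\<in>L. blaschke_node l m * g m)"
    using assms by (auto simp: blaschke_ext_at_pole intro!: sum.cong blaschke_ext_at_node)
  also have "\<dots> = a + (\<Sum>m\<in>L. (blaschke_pole l m + blaschke_node l m) * g m)"
    by (simp add: sum.distrib distrib_right)
  also have "\<dots> = a + (\<Sum>m\<in>L. g m)"
    using assms(2) blaschke_pole_add_node by (metis (no_types, lifting) mult_1 sum.cong)
  finally show ?thesis .
qed

lemma mult_blaschke_ext: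
  assumes "l \<notin> L" "m \<in> insert l L"
  shows "m * blaschke_ext l L a g m
       = blaschke_ext l L (l * a + (l + cnj l) * (\<Sum>m'\<in>L. g m')) (\<lambda>m'. m' * g m') m"
proof (cases "m = l")
  case True
  have "l * (\<Sum>m'\<in>L. blaschke_pole l m' * g m')
      = (\<Sum>m'\<in>L. (l + cnj l) * g m' + blaschke_pole l m' * (m' * g m'))"
    unfolding sum_distrib_left
  proof (intro sum.cong refl)
    fix m' assume "m' \<in> L"
    then have "m' \<noteq> l" using assms by auto
    then show "l * (blaschke_pole l m' * g m') = (l + cnj l) * g m' + blaschke_pole l m' * (m' * g m')"
      by (simp add: mult.assoc[symmetric] mult_blaschke_pole distrib_right)
  qed
  then show ?thesis
    using True by (simp add: blaschke_ext_at_pole distrib_left sum.distrib sum_distrib_left add.assoc)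
qed (simp add: blaschke_ext_at_node)

lemma exp_inner_insert:
  assumes "finite L" "l \<notin> L"
  shows "exp_inner (insert l L) c d = c l * cnj (d l) * cauchy_kernel l l
     + c l * (\<Sum>m\<in>L. cnj (d m) * cauchy_kernel l m)
     + (\<Sum>m\<in>L. c m * cauchy_kernel m l) * cnj (d l) + exp_inner L c d"
  using assms unfolding exp_inner_def
  by (simp add: sum.distrib sum_distrib_left sum_distrib_right mult_ac)

lemma sum_blaschke_ext_kernel:
  assumes "l \<notin> L" "Re l < 0" "\<forall>m\<in>L. Re m < 0"
  shows "(\<Sum>m\<in>L. blaschke_ext l L a g m * cauchy_kernel m l)
       = - cauchy_kernel l l * (\<Sum>m\<in>L. blaschke_pole l m * g m)"
  unfolding sum_distrib_left
proof (intro sum.cong refl)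
  fix m assume "m \<in> L"
  then have "m \<noteq> l" "Re m < 0" using assms by auto
  then show "blaschke_ext l L a g m * cauchy_kernel m l = - cauchy_kernel l l * (blaschke_pole l m * g m)"
    using blaschke_node_kernel[OF assms(2)] by (simp add: blaschke_ext_at_node mult_ac)
qed

lemma sum_cnj_blaschke_ext_kernel:
  assumes "l \<notin> L" "Re l < 0" "\<forall>m\<in>L. Re m < 0"
  shows "(\<Sum>m\<in>L. cnj (blaschke_ext l L b h m) * cauchy_kernel l m)
       = - cauchy_kernel l l * cnj (\<Sum>m\<in>L. blaschke_pole l m * h m)"
  unfolding cnj_sum sum_distrib_left
proof (intro sum.cong refl)
  fix m assume "m \<in> L"
  then have "m \<noteq> l" "Re m < 0" using assms by auto
  then show "cnj (blaschke_ext l L b h m) * cauchy_kernel l m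
      = - cauchy_kernel l l * cnj (blaschke_pole l m * h m)"
    using cnj_blaschke_node_kernel[OF assms(2)] by (simp add: blaschke_ext_at_node mult_ac)
qed

lemma exp_inner_blaschke_ext_nodes:
  assumes "l \<notin> L" "Re l < 0" "\<forall>m\<in>L. Re m < 0"
  shows "exp_inner L (blaschke_ext l L a g) (blaschke_ext l L b h) = exp_inner L g h
     + cauchy_kernel l l * (\<Sum>m\<in>L. blaschke_pole l m * g m) * cnj (\<Sum>m\<in>L. blaschke_pole l m * h m)"
proof -
  have "exp_inner L (blaschke_ext l L a g) (blaschke_ext l L b h)
      = (\<Sum>m\<in>L. \<Sum>m'\<in>L. g m * cnj (h m') * cauchy_kernel m m'
          + cauchy_kernel l l * ((blaschke_pole l m * g m) * cnj (blaschke_pole l m' * h m')))"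
    unfolding exp_inner_def
  proof (intro sum.cong refl)
    fix m m' assume "m \<in> L" "m' \<in> L"
    then have "m \<noteq> l" "m' \<noteq> l" "Re m < 0" "Re m' < 0" using assms by auto
    then show "blaschke_ext l L a g m * cnj (blaschke_ext l L b h m') * cauchy_kernel m m'
        = g m * cnj (h m') * cauchy_kernel m m'
          + cauchy_kernel l l * ((blaschke_pole l m * g m) * cnj (blaschke_pole l m' * h m'))"
      using blaschke_node_kernel_node[OF assms(2), of m m']
      by (simp add: blaschke_ext_at_node algebra_simps)
  qed
  also have "\<dots> = exp_inner L g h + cauchy_kernel l l
      * (\<Sum>m\<in>L. \<Sum>m'\<in>L. (blaschke_pole l m * g m) * cnj (blaschke_pole l m' * h m'))"
    unfolding exp_inner_def by (simp add: sum.distrib sum_distrib_left)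
  also have "(\<Sum>m\<in>L. \<Sum>m'\<in>L. (blaschke_pole l m * g m) * cnj (blaschke_pole l m' * h m'))
      = (\<Sum>m\<in>L. blaschke_pole l m * g m) * cnj (\<Sum>m\<in>L. blaschke_pole l m * h m)"
    unfolding cnj_sum sum_product ..
  finally show ?thesis by (simp add: mult.assoc)
qed

lemma exp_inner_blaschke_ext:
  assumes "finite L" "l \<notin> L" "Re l < 0" "\<forall>m\<in>L. Re m < 0"
  shows "exp_inner (insert l L) (blaschke_ext l L a g) (blaschke_ext l L b h)
       = a * cnj b * cauchy_kernel l l + exp_inner L g h"
  unfolding exp_inner_insert[OF assms(1,2)] blaschke_ext_at_pole
    sum_blaschke_ext_kernel[OF assms(2-4)] sum_cnj_blaschke_ext_kernel[OF assms(2-4)]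
    exp_inner_blaschke_ext_nodes[OF assms(2-4)]
  by (simp add: algebra_simps)

lemma exp_norm2_blaschke_ext:
  assumes "finite L" "l \<notin> L" "Re l < 0" "\<forall>m\<in>L. Re m < 0"
  shows "exp_norm2 (insert l L) (blaschke_ext l L a g) = (cmod a)^2 / (2 * - Re l) + exp_norm2 L g"
proof -
  have "a * cnj a * cauchy_kernel l l = complex_of_real ((cmod a)^2 * (- 1 / (2 * Re l)))"
    unfolding cauchy_kernel_diag complex_norm_square[symmetric] of_real_mult[symmetric] ..
  then show ?thesis unfolding exp_norm2_def exp_inner_blaschke_ext[OF assms] by simp
qed

lemma exp_norm2_cong: "(\<And>m. m \<in> L \<Longrightarrow> c m = d m) \<Longrightarrow> exp_norm2 L c = exp_norm2 L d"
  unfolding exp_norm2_def exp_inner_def by (auto intro!: sum.cong arg_cong[where f=Re])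

lemma exp_norm2_head_tail:
  assumes "finite L" "l \<notin> L" "Re l < 0" "\<forall>m\<in>L. Re m < 0"
  shows "exp_norm2 (insert l L) c
       = (cmod (blaschke_head l L c))^2 / (2 * - Re l) + exp_norm2 L (blaschke_tail l c)"
proof -
  have "exp_norm2 (insert l L) c
      = exp_norm2 (insert l L) (blaschke_ext l L (blaschke_head l L c) (blaschke_tail l c))"
    by (intro exp_norm2_cong) (simp add: blaschke_ext_head_tail[OF assms(2-4)])
  then show ?thesis by (simp add: exp_norm2_blaschke_ext[OF assms])
qed

lemma sum_head_tail:
  assumes "finite L" "l \<notin> L" "Re l < 0" "\<forall>m\<in>L. Re m < 0"
  shows "(\<Sum>m\<in>insert l L. c m) = blaschke_head l L c + (\<Sum>m\<in>L. blaschke_tail l c m)"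
proof -
  have "(\<Sum>m\<in>insert l L. c m)
      = (\<Sum>m\<in>insert l L. blaschke_ext l L (blaschke_head l L c) (blaschke_tail l c) m)"
    by (intro sum.cong) (simp_all add: blaschke_ext_head_tail[OF assms(2-4)])
  then show ?thesis by (simp add: sum_blaschke_ext[OF assms(1,2)])
qed

lemma exp_norm2_nonneg:
  assumes "finite L" "\<forall>m\<in>L. Re m < 0"
  shows "0 \<le> exp_norm2 L c"
  using assms
proof (induction L arbitrary: c rule: finite_induct)
  case empty
  then show ?case by (simp add: exp_norm2_def exp_inner_def)
next
  case (insert l L)
  then have "Re l < 0" "\<forall>m\<in>L. Re m < 0" by auto
  then have "0 \<le> (cmod (blaschke_head l L c))^2 / (2 * - Re l)"
    by (intro divide_nonneg_pos) auto
  then show ?case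
    unfolding exp_norm2_head_tail[OF insert(1,2) \<open>Re l < 0\<close> \<open>\<forall>m\<in>L. Re m < 0\<close>]
    using insert.IH \<open>\<forall>m\<in>L. Re m < 0\<close> by (intro add_nonneg_nonneg)
qed

lemma sq_add_le_weighted:
  fixes x y u v q :: real
  assumes "0 \<le> x" "0 \<le> y" "0 < u" "0 \<le> v" "0 \<le> q" "y^2 \<le> v * q"
  shows "(x + y)^2 \<le> (u + v) * (x^2 / u + q)"
proof (cases "v = 0")
  case True
  then have "y = 0" using assms by (simp add: power2_eq_square mult_le_0_iff)
  moreover have "u * (x^2 / u) = x^2" using assms by simp
  ultimately show ?thesis using True assms by (simp add: distrib_left)
next
  case False
  then have v: "0 < v" using assms by simp
  have "0 \<le> (v * x - u * y)^2 / (u * v)" using v assms by simp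
  also have "\<dots> = (v / u) * x^2 - 2 * x * y + (u / v) * y^2"
    using v assms by (simp add: power2_diff field_simps power2_eq_square)
  finally have am_gm: "2 * x * y \<le> (v / u) * x^2 + (u / v) * y^2" by simp
  have "(u / v) * y^2 \<le> (u / v) * (v * q)" using assms v by (intro mult_left_mono) auto
  then have "(u / v) * y^2 \<le> u * q" using v by simp
  then have "(x + y)^2 \<le> x^2 + ((v / u) * x^2 + u * q) + v * q"
    using am_gm assms by (simp add: power2_sum)
  also have "\<dots> = (u + v) * (x^2 / u + q)" using assms by (simp add: field_simps)
  finally show ?thesis .
qed

lemma norm_sum_coeffs_sq_le:
  assumes "finite L" "\<forall>m\<in>L. Re m < 0"
  shows "(cmod (\<Sum>m\<in>L. c m))^2 \<le> 2 * (\<Sum>m\<in>L. - Re m) * exp_norm2 L c"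
  using assms
proof (induction L arbitrary: c rule: finite_induct)
  case empty
  then show ?case by simp
next
  case (insert l L)
  let ?a = "blaschke_head l L c" and ?g = "blaschke_tail l c"
  have neg: "Re l < 0" "\<forall>m\<in>L. Re m < 0" using insert by auto
  have "0 \<le> (\<Sum>m\<in>L. - Re m)" using neg by (intro sum_nonneg) (auto simp: less_imp_le)
  have "cmod (\<Sum>m\<in>insert l L. c m) \<le> cmod ?a + cmod (\<Sum>m\<in>L. ?g m)"
    unfolding sum_head_tail[OF insert(1,2) neg] by (rule norm_triangle_ineq)
  then have "(cmod (\<Sum>m\<in>insert l L. c m))^2 \<le> (cmod ?a + cmod (\<Sum>m\<in>L. ?g m))^2"
    by (intro power_mono) auto
  also have "\<dots> \<le> (2 * - Re l + 2 * (\<Sum>m\<in>L. - Re m)) * ((cmod ?a)^2 / (2 * - Re l) + exp_norm2 L ?g)"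
    using neg insert.IH[OF neg(2)] \<open>0 \<le> (\<Sum>m\<in>L. - Re m)\<close> exp_norm2_nonneg[OF insert(1) neg(2)]
    by (intro sq_add_le_weighted) auto
  also have "\<dots> = 2 * (\<Sum>m\<in>insert l L. - Re m) * exp_norm2 (insert l L) c"
    unfolding exp_norm2_head_tail[OF insert(1,2) neg] using insert(1,2) by (simp add: algebra_simps)
  finally show ?case .
qed

lemma sqrt_weighted_triangle:
  fixes k z x y N N1 N2 :: real
  assumes "0 \<le> k" "0 \<le> z" "z \<le> x + y" "0 \<le> N" "0 \<le> N1" "0 \<le> N2" "sqrt N \<le> sqrt N1 + sqrt N2"
  shows "sqrt (z^2 * k + N) \<le> sqrt (x^2 * k + N1) + sqrt (y^2 * k + N2)"
proof -
  have "z^2 * k \<le> ((x + y) * sqrt k)^2"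
    using assms by (simp add: power_mult_distrib mult_right_mono power_mono)
  moreover have "N \<le> (sqrt N1 + sqrt N2)^2"
    using assms by (metis real_sqrt_le_iff real_sqrt_pow2 power_mono real_sqrt_ge_zero)
  ultimately have "sqrt (z^2 * k + N) \<le> norm ((x + y) * sqrt k, sqrt N1 + sqrt N2)"
    unfolding norm_Pair by (intro real_sqrt_le_mono) simp
  also have "\<dots> \<le> norm (x * sqrt k, sqrt N1) + norm (y * sqrt k, sqrt N2)"
    using norm_triangle_ineq[of "(x * sqrt k, sqrt N1)" "(y * sqrt k, sqrt N2)"]
    by (simp add: distrib_right)
  also have "\<dots> = sqrt (x^2 * k + N1) + sqrt (y^2 * k + N2)"
    using assms by (simp add: norm_Pair power_mult_distrib)
  finally show ?thesis .
qed

lemma exp_norm2_triangle: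
  assumes "finite L" "\<forall>m\<in>L. Re m < 0"
  shows "sqrt (exp_norm2 L (\<lambda>m. c m + d m)) \<le> sqrt (exp_norm2 L c) + sqrt (exp_norm2 L d)"
  using assms
proof (induction L arbitrary: c d rule: finite_induct)
  case empty
  then show ?case by (simp add: exp_norm2_def exp_inner_def)
next
  case (insert l L)
  have neg: "Re l < 0" "\<forall>m\<in>L. Re m < 0" using insert by auto
  have head: "blaschke_head l L (\<lambda>m. c m + d m) = blaschke_head l L c + blaschke_head l L d"
    unfolding blaschke_head_def blaschke_tail_def
    by (simp add: add_divide_distrib distrib_left sum.distrib)
  have tail: "blaschke_tail l (\<lambda>m. c m + d m) = (\<lambda>m. blaschke_tail l c m + blaschke_tail l d m)"
    unfolding blaschke_tail_def by (simp add: add_divide_distrib)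
  have "0 \<le> 1 / (2 * - Re l)" using neg by simp
  from sqrt_weighted_triangle[OF this _ norm_triangle_ineq _ _ _ insert.IH[OF neg(2)]]
  show ?case
    unfolding exp_norm2_head_tail[OF insert(1,2) neg] head tail
    using exp_norm2_nonneg[OF insert(1) neg(2)] by simp
qed

definition cross_sum :: "('a \<Rightarrow> real) \<Rightarrow> 'a set \<Rightarrow> real" where
  "cross_sum x J = (\<Sum>j\<in>J. x j)^2 - (\<Sum>j\<in>J. (x j)^2)"

lemma cross_sum_insert:
  "finite J \<Longrightarrow> k \<notin> J \<Longrightarrow> cross_sum x (insert k J) = cross_sum x J + 2 * x k * (\<Sum>j\<in>J. x j)"
  unfolding cross_sum_def by (simp add: power2_eq_square algebra_simps)

lemma cross_sum_nonneg:
  assumes "finite J" "\<forall>j\<in>J. 0 \<le> x j"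
  shows "0 \<le> cross_sum x J"
  using assms
proof (induction J rule: finite_induct)
  case empty
  then show ?case by (simp add: cross_sum_def)
next
  case (insert k J)
  then show ?case by (simp add: cross_sum_insert sum_nonneg)
qed

lemma cross_sum_image_le:
  assumes "finite J" "\<forall>j\<in>J. 0 \<le> x (g j)"
  shows "cross_sum x (g ` J) \<le> cross_sum (\<lambda>j. x (g j)) J"
  using assms
proof (induction J rule: finite_induct)
  case empty
  then show ?case by (simp add: cross_sum_def)
next
  case (insert k J)
  have IH: "cross_sum x (g ` J) \<le> cross_sum (\<lambda>j. x (g j)) J" using insert by auto
  have "0 \<le> 2 * x (g k) * (\<Sum>j\<in>J. x (g j))" using insert by (simp add: sum_nonneg)
  moreover have "2 * x (g k) * (\<Sum>y\<in>g ` J. x y) \<le> 2 * x (g k) * (\<Sum>j\<in>J. x (g j))"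
    using insert sum_image_le[OF insert(1), of x g] by (intro mult_left_mono) (auto simp: o_def)
  ultimately show ?case
    using IH insert(1,2) by (cases "g k \<in> g ` J") (auto simp: insert_absorb cross_sum_insert)
qed

lemma cross_sum_atLeastAtMost:
  fixes x :: "nat \<Rightarrow> real"
  shows "cross_sum x {1..n} = 2 * (\<Sum>j=1..n. x j * (\<Sum>k=j+1..n. x k))"
proof (induction n)
  case 0
  then show ?case by (simp add: cross_sum_def)
next
  case (Suc n)
  have "{1..Suc n} = insert (Suc n) {1..n}" by auto
  then have "cross_sum x {1..Suc n} = cross_sum x {1..n} + 2 * x (Suc n) * (\<Sum>j=1..n. x j)"
    by (simp add: cross_sum_insert)
  moreover have "(\<Sum>j=1..Suc n. x j * (\<Sum>k=j+1..Suc n. x k))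
      = (\<Sum>j=1..n. x j * (\<Sum>k=j+1..n. x k)) + (\<Sum>j=1..n. x j) * x (Suc n)"
    by (simp add: sum.distrib sum_distrib_right distrib_left)
  ultimately show ?case using Suc by (simp add: algebra_simps)
qed

lemma exp_norm2_blaschke_ext_mult_pole_le:
  assumes "finite L" "l \<notin> L" "Re l < 0" "\<forall>m\<in>L. Re m < 0" "cmod l \<le> K"
    and "exp_norm2 L p \<le> K^2 * exp_norm2 L g"
  shows "exp_norm2 (insert l L) (blaschke_ext l L (l * a) p)
       \<le> K^2 * exp_norm2 (insert l L) (blaschke_ext l L a g)"
proof -
  have "(cmod (l * a))^2 \<le> K^2 * (cmod a)^2"
    unfolding norm_mult power_mult_distrib using assms(5) by (intro mult_right_mono power_mono) auto
  then have "(cmod (l * a))^2 / (2 * - Re l) \<le> K^2 * (cmod a)^2 / (2 * - Re l)"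
    using assms(3) by (intro divide_right_mono) auto
  then have "(cmod (l * a))^2 / (2 * - Re l) \<le> K^2 * ((cmod a)^2 / (2 * - Re l))"
    by simp
  then show ?thesis
    unfolding exp_norm2_blaschke_ext[OF assms(1-4)] distrib_left using assms(6) by (rule add_mono)
qed

lemma exp_norm2_blaschke_ext_value_le:
  assumes "finite L" "l \<notin> L" "Re l < 0" "\<forall>m\<in>L. Re m < 0"
    and "exp_norm2 L q \<le> 2 * cross_sum (\<lambda>m. - Re m) L * exp_norm2 L g"
  shows "exp_norm2 (insert l L) (blaschke_ext l L ((l + cnj l) * (\<Sum>m\<in>L. g m)) q)
       \<le> 2 * cross_sum (\<lambda>m. - Re m) (insert l L) * exp_norm2 (insert l L) (blaschke_ext l L a g)"
proof -
  have "(cmod ((l + cnj l) * (\<Sum>m\<in>L. g m)))^2 / (2 * - Re l) = 2 * - Re l * (cmod (\<Sum>m\<in>L. g m))^2"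
    using assms(3) by (simp add: norm_mult complex_add_cnj power2_eq_square)
  also have "\<dots> \<le> 2 * - Re l * (2 * (\<Sum>m\<in>L. - Re m) * exp_norm2 L g)"
    using assms(3) norm_sum_coeffs_sq_le[OF assms(1,4)] by (intro mult_left_mono) auto
  finally have "exp_norm2 (insert l L) (blaschke_ext l L ((l + cnj l) * (\<Sum>m\<in>L. g m)) q)
      \<le> 2 * cross_sum (\<lambda>m. - Re m) (insert l L) * exp_norm2 L g"
    unfolding exp_norm2_blaschke_ext[OF assms(1-4)] cross_sum_insert[OF assms(1,2)]
    using assms(5) by (simp add: algebra_simps)
  also have "\<dots> \<le> 2 * cross_sum (\<lambda>m. - Re m) (insert l L) * exp_norm2 (insert l L) (blaschke_ext l L a g)"
  proof (rule mult_left_mono)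
    have "0 \<le> (cmod a)^2 / (2 * - Re l)" using assms(3) by (intro divide_nonneg_pos) auto
    then show "exp_norm2 L g \<le> exp_norm2 (insert l L) (blaschke_ext l L a g)"
      unfolding exp_norm2_blaschke_ext[OF assms(1-4)] by simp
    show "0 \<le> 2 * cross_sum (\<lambda>m. - Re m) (insert l L)"
      using assms(1-4) by (simp add: cross_sum_nonneg less_imp_le)
  qed
  finally show ?thesis .
qed

lemma mult_coeffs_split:
  assumes "finite L" "\<forall>m\<in>L. Re m < 0" "\<forall>m\<in>L. cmod m \<le> K"
  shows "\<exists>p q. (\<forall>m\<in>L. m * c m = p m + q m)
    \<and> exp_norm2 L p \<le> K^2 * exp_norm2 L c
    \<and> exp_norm2 L q \<le> 2 * cross_sum (\<lambda>m. - Re m) L * exp_norm2 L c"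
  using assms
proof (induction L arbitrary: c rule: finite_induct)
  case empty
  show ?case by (simp add: exp_norm2_def exp_inner_def)
next
  case (insert l L)
  have neg: "Re l < 0" "\<forall>m\<in>L. Re m < 0" and "cmod l \<le> K" "\<forall>m\<in>L. cmod m \<le> K"
    using insert by auto
  let ?a = "blaschke_head l L c" and ?g = "blaschke_tail l c"
  obtain p q where split: "\<forall>m\<in>L. m * ?g m = p m + q m"
    and p: "exp_norm2 L p \<le> K^2 * exp_norm2 L ?g"
    and q: "exp_norm2 L q \<le> 2 * cross_sum (\<lambda>m. - Re m) L * exp_norm2 L ?g"
    using insert.IH[OF neg(2) \<open>\<forall>m\<in>L. cmod m \<le> K\<close>] by blast
  have c: "\<And>m. m \<in> insert l L \<Longrightarrow> c m = blaschke_ext l L ?a ?g m"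
    using blaschke_ext_head_tail[OF insert(2) neg] by simp
  define P where "P = blaschke_ext l L (l * ?a) p"
  define Q where "Q = blaschke_ext l L ((l + cnj l) * (\<Sum>m\<in>L. ?g m)) q"
  have c_norm: "exp_norm2 (insert l L) c = exp_norm2 (insert l L) (blaschke_ext l L ?a ?g)"
    using c by (rule exp_norm2_cong)
  show ?case
  proof (intro exI conjI ballI)
    fix m assume m: "m \<in> insert l L"
    have "m * c m = blaschke_ext l L (l * ?a + (l + cnj l) * (\<Sum>m\<in>L. ?g m)) (\<lambda>m. m * ?g m) m"
      using c[OF m] mult_blaschke_ext[OF insert(2) m] by simp
    also have "\<dots> = blaschke_ext l L (l * ?a + (l + cnj l) * (\<Sum>m\<in>L. ?g m)) (\<lambda>m. p m + q m) m"
      using split m by (intro blaschke_ext_cong) auto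
    also have "\<dots> = P m + Q m"
      unfolding P_def Q_def blaschke_ext_add ..
    finally show "m * c m = P m + Q m" .
  next
    show "exp_norm2 (insert l L) P \<le> K^2 * exp_norm2 (insert l L) c"
      unfolding c_norm P_def by (rule exp_norm2_blaschke_ext_mult_pole_le[OF insert(1,2) neg \<open>cmod l \<le> K\<close> p])
    show "exp_norm2 (insert l L) Q \<le> 2 * cross_sum (\<lambda>m. - Re m) (insert l L) * exp_norm2 (insert l L) c"
      unfolding c_norm Q_def by (rule exp_norm2_blaschke_ext_value_le[OF insert(1,2) neg q])
  qed
qed

lemma L2_norm_pos_deriv_exp_sum_le:
  assumes "finite L" "\<forall>m\<in>L. Re m < 0" "\<forall>m\<in>L. cmod m \<le> K" "0 \<le> K"
  shows "L2_norm_pos (\<lambda>t. vector_derivative (exp_sum L c) (at t))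
       \<le> (K + sqrt (2 * cross_sum (\<lambda>m. - Re m) L)) * L2_norm_pos (exp_sum L c)"
proof -
  obtain p q where split: "\<forall>m\<in>L. m * c m = p m + q m"
    and p: "exp_norm2 L p \<le> K^2 * exp_norm2 L c"
    and q: "exp_norm2 L q \<le> 2 * cross_sum (\<lambda>m. - Re m) L * exp_norm2 L c"
    using mult_coeffs_split[OF assms(1-3)] by blast
  have "(\<lambda>t. vector_derivative (exp_sum L c) (at t)) = exp_sum L (\<lambda>m. m * c m)"
    using has_vector_derivative_exp_sum by (intro ext vector_derivative_at) blast
  then have "L2_norm_pos (\<lambda>t. vector_derivative (exp_sum L c) (at t))
      = sqrt (exp_norm2 L (\<lambda>m. p m + q m))"
    using split exp_norm2_cong[of L "\<lambda>m. m * c m"] by (simp add: L2_norm_pos_exp_sum[OF assms(1,2)])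
  also have "\<dots> \<le> sqrt (exp_norm2 L p) + sqrt (exp_norm2 L q)"
    by (rule exp_norm2_triangle[OF assms(1,2)])
  also have "\<dots> \<le> sqrt (K^2 * exp_norm2 L c) + sqrt (2 * cross_sum (\<lambda>m. - Re m) L * exp_norm2 L c)"
    using p q by (intro add_mono real_sqrt_le_mono)
  also have "\<dots> = (K + sqrt (2 * cross_sum (\<lambda>m. - Re m) L)) * L2_norm_pos (exp_sum L c)"
    using assms(4) by (simp add: L2_norm_pos_exp_sum[OF assms(1,2)] real_sqrt_mult distrib_right)
  finally show ?thesis .
qed

theorem theorem11p1:
  fixes n :: nat and a lam :: "nat \<Rightarrow> complex" and f :: "real \<Rightarrow> complex"
  assumes "n \<ge> 1"
    and "\<And>j. j \<in> {1..n} \<Longrightarrow> Re (lam j) < 0"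
    and "\<And>t. f t = (\<Sum>j=1..n. a j * exp (lam j * complex_of_real t))"
  shows "L2_norm_pos (\<lambda>t. vector_derivative f (at t))
     \<le> (1/2 + (MAX j\<in>{1..n}. cmod (lam j + 1/2))
          + 2 * sqrt (\<Sum>j=1..n. Re (lam j) * (\<Sum>k=j+1..n. Re (lam k))))
        * L2_norm_pos f"
proof -
  define L where "L = lam ` {1..n}"
  define K where "K = 1/2 + (MAX j\<in>{1..n}. cmod (lam j + 1/2))"
  have L: "finite L" "\<forall>m\<in>L. Re m < 0" using assms(2) by (auto simp: L_def)
  have f: "f = exp_sum L (\<lambda>m. \<Sum>j\<in>{j\<in>{1..n}. lam j = m}. a j)"
    using assms(3) by (auto simp: L_def exp_sum_reindex)
  have K: "\<forall>m\<in>L. cmod m \<le> K"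
  proof
    fix m assume "m \<in> L"
    then obtain j where j: "j \<in> {1..n}" "m = lam j" by (auto simp: L_def)
    have "cmod m \<le> cmod (lam j + 1/2) + 1/2"
      using norm_triangle_ineq4[of "lam j + 1/2" "1/2"] j by simp
    moreover have "cmod (lam j + 1/2) \<le> (MAX j\<in>{1..n}. cmod (lam j + 1/2))"
      using j by (intro Max_ge) auto
    ultimately show "cmod m \<le> K" unfolding K_def by linarith
  qed
  have "cmod (lam 1 + 1/2) \<le> (MAX j\<in>{1..n}. cmod (lam j + 1/2))"
    using assms(1) by (intro Max_ge) auto
  then have "0 \<le> K" unfolding K_def using norm_ge_zero[of "lam 1 + 1/2"] by linarith
  have "sqrt (2 * cross_sum (\<lambda>m. - Re m) L) \<le> sqrt (2 * cross_sum (\<lambda>j. - Re (lam j)) {1..n})"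
    unfolding L_def using assms(2)
    by (intro real_sqrt_le_mono mult_left_mono cross_sum_image_le) (auto simp: less_imp_le)
  also have "2 * cross_sum (\<lambda>j. - Re (lam j)) {1..n} = 2^2 * (\<Sum>j=1..n. Re (lam j) * (\<Sum>k=j+1..n. Re (lam k)))"
    unfolding cross_sum_atLeastAtMost by (simp add: sum_negf)
  also have "sqrt \<dots> = 2 * sqrt (\<Sum>j=1..n. Re (lam j) * (\<Sum>k=j+1..n. Re (lam k)))"
    by (simp add: real_sqrt_mult)
  finally have cross: "sqrt (2 * cross_sum (\<lambda>m. - Re m) L)
      \<le> 2 * sqrt (\<Sum>j=1..n. Re (lam j) * (\<Sum>k=j+1..n. Re (lam k)))" .
  have "L2_norm_pos (\<lambda>t. vector_derivative f (at t))
      \<le> (K + sqrt (2 * cross_sum (\<lambda>m. - Re m) L)) * L2_norm_pos f"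
    unfolding f by (rule L2_norm_pos_deriv_exp_sum_le[OF L K \<open>0 \<le> K\<close>])
  also have "\<dots> \<le> (K + 2 * sqrt (\<Sum>j=1..n. Re (lam j) * (\<Sum>k=j+1..n. Re (lam k)))) * L2_norm_pos f"
    using cross exp_norm2_nonneg[OF L] unfolding f L2_norm_pos_exp_sum[OF L]
    by (intro mult_right_mono) auto
  finally show ?thesis unfolding K_def by simp
qed

end
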